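(* Let $A$ and $B$ be nonzero integers, let $g=\gcd(A,B)$, write $A=ga$, $B=gb$, and let $L$ be a positive integer such that every prime divisor of $L$ divides $g$ (i.e. $\ell=\prod_{p\nmid g}p^{\nu_p(L)}=1$). Let $\gamma(L)=\max_{p\mid g}\left\lceil \nu_p(L)/\nu_p(g)\right\rceil$ (with $\gamma(L)=0$ if $g=1$). Then $L\in G_{(A,B)}$ if and only if there exists a positive integer $K\ge\gamma(L)$. In this case $L\in G_{(A,B)}$ and every positive integer $K\ge\gamma(L)$ satisfies $L\mid(A^K+B^K)$.
   Context: For nonzero integers $x,y$, $G_{(x,y)}$ is the set of positive integers $n$ such that $n\mid(x^k+y^k)$ for some positive integer $k$. $\nu_p$ is the $p$-adic valuation; products and maxima over $p$ range over primes. *)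

theory Defs
  imports "HOL-Computational_Algebra.Primes" Complex_Main
begin

definition G_set :: "int \<Rightarrow> int \<Rightarrow> nat set" where
  "G_set x y = {n. n > 0 \<and> (\<exists>k::nat. k > 0 \<and> int n dvd x ^ k + y ^ k)}"

definition gamma :: "nat \<Rightarrow> nat \<Rightarrow> nat" where
  "gamma g L = Max (insert 0
     ((\<lambda>p. nat \<lceil>real (multiplicity p L) / real (multiplicity p g)\<rceil>) ` prime_factors g))"

end

theory Submission
  imports Defs
begin

text \<open>Since every prime factor of \<open>L\<close> divides \<open>g = gcd A B\<close>, taking \<open>K \<ge> \<gamma>(L)\<close> makes
  \<open>\<nu>\<^sub>p(L) \<le> K \<nu>\<^sub>p(g) = \<nu>\<^sub>p(g\<^sup>K)\<close> for every prime \<open>p\<close>, so \<open>L\<close> divides \<open>g\<^sup>K\<close>, which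
  divides \<open>A\<^sup>K + B\<^sup>K\<close>.\<close>

lemma multiplicity_le_gamma_mult:
  fixes g L p :: nat
  assumes "p \<in> prime_factors g"
  shows "multiplicity p L \<le> gamma g L * multiplicity p g"
proof -
  have pos: "multiplicity p g > 0"
    using assms by (simp add: prime_factors_multiplicity)
  let ?c = "nat \<lceil>real (multiplicity p L) / real (multiplicity p g)\<rceil>"
  have "?c \<le> gamma g L"
    unfolding gamma_def by (rule Max_ge) (use assms in auto)
  then have "real (multiplicity p L) / real (multiplicity p g) \<le> real (gamma g L)"
    by linarith
  then have "real (multiplicity p L) \<le> real (gamma g L) * real (multiplicity p g)"
    using pos by (simp add: divide_le_eq)
  then show ?thesis
    by (metis of_nat_le_iff of_nat_mult)
qed

lemma dvd_power_if_multiplicity_le: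
  fixes g L K :: nat
  assumes "g \<noteq> 0" and "L \<noteq> 0"
    and prime_dvd: "\<And>p. prime p \<Longrightarrow> p dvd L \<Longrightarrow> p dvd g"
    and mult_le: "\<And>p. p \<in> prime_factors g \<Longrightarrow> multiplicity p L \<le> K * multiplicity p g"
  shows "L dvd g ^ K"
proof (rule multiplicity_le_imp_dvd)
  fix p :: nat assume p: "prime p"
  show "multiplicity p L \<le> multiplicity p (g ^ K)"
  proof (cases "p dvd L")
    case False
    then show ?thesis by (simp add: not_dvd_imp_multiplicity_0)
  next
    case True
    then have "p \<in> prime_factors g"
      using p prime_dvd \<open>g \<noteq> 0\<close> by (simp add: in_prime_factors_iff)
    then have "multiplicity p L \<le> K * multiplicity p g"
      by (rule mult_le)
    also have "\<dots> = multiplicity p (g ^ K)"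
      using p \<open>g \<noteq> 0\<close> by (simp add: prime_elem_multiplicity_power_distrib)
    finally show ?thesis .
  qed
qed (use \<open>L \<noteq> 0\<close> in simp)

lemma dvd_power_if_gamma_le:
  fixes g L K :: nat
  assumes "g \<noteq> 0" and "L \<noteq> 0"
    and "\<And>p. prime p \<Longrightarrow> p dvd L \<Longrightarrow> p dvd g"
    and "gamma g L \<le> K"
  shows "L dvd g ^ K"
proof (rule dvd_power_if_multiplicity_le[OF assms(1-3)])
  fix p assume "p \<in> prime_factors g"
  then have "multiplicity p L \<le> gamma g L * multiplicity p g"
    by (rule multiplicity_le_gamma_mult)
  also have "\<dots> \<le> K * multiplicity p g"
    using \<open>gamma g L \<le> K\<close> by simp
  finally show "multiplicity p L \<le> K * multiplicity p g" .
qed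

lemma gcd_power_dvd_power_add:
  fixes a b :: "'a :: semiring_gcd"
  shows "gcd a b ^ k dvd a ^ k + b ^ k"
  by (simp add: dvd_add dvd_power_same)

theorem corollary3p11:
  fixes A B :: int and L :: nat
  assumes "A \<noteq> 0" and "B \<noteq> 0" and "L > 0"
    and "\<forall>p::nat. prime p \<and> p dvd L \<longrightarrow> p dvd nat (gcd A B)"
  shows "(L \<in> G_set A B \<longleftrightarrow> (\<exists>K::nat. K > 0 \<and> K \<ge> gamma (nat (gcd A B)) L))
         \<and> L \<in> G_set A B
         \<and> (\<forall>K::nat. K > 0 \<and> K \<ge> gamma (nat (gcd A B)) L \<longrightarrow> int L dvd A ^ K + B ^ K)"
proof -
  let ?g = "nat (gcd A B)"
  have dvd_sum: "int L dvd A ^ K + B ^ K" if "gamma ?g L \<le> K" for K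
  proof -
    have "?g \<noteq> 0"
      using \<open>A \<noteq> 0\<close> by (simp add: not_le)
    then have "L dvd ?g ^ K"
      using dvd_power_if_gamma_le[OF _ _ _ that] assms(3,4) by auto
    then have "int L dvd gcd A B ^ K"
      by (metis gcd_ge_0_int int_dvd_int_iff int_nat_eq of_nat_power)
    then show ?thesis
      using gcd_power_dvd_power_add dvd_trans by blast
  qed
  define K0 where "K0 = max 1 (gamma ?g L)"
  have K0: "K0 > 0 \<and> K0 \<ge> gamma ?g L"
    by (simp add: K0_def)
  then have "L \<in> G_set A B"
    unfolding G_set_def using \<open>L > 0\<close> dvd_sum by blast
  then show ?thesis
    using K0 dvd_sum by blast
qed

end
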